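(* Let $n\ge 2$ and let $\mu_1,\mu_2\in\Lambda$ satisfy $\alpha^\vee_i(\mu_1)=\alpha^\vee_i(\mu_2)$ for all $1\le i\le n-1$. Then the assignment $$E^{(r)}_i\mapsto E^{(r)}_i,\quad F^{(r)}_i\mapsto F^{(r)}_i,\quad D^{(s)}_i\mapsto D^{(s-\epsilon^\vee_i(\mu_1-\mu_2))}_i,\quad \widetilde D^{(s)}_i\mapsto \widetilde D^{(s+\epsilon^\vee_i(\mu_1-\mu_2))}_i$$ (for all admissible $i,r,s$) gives rise to a $\mathbb{C}$-algebra isomorphism $Y_{\mu_1}(\mathfrak{gl}_n)\xrightarrow{\sim} Y_{\mu_2}(\mathfrak{gl}_n)$.
   Context: Let $\Lambda=\bigoplus_{j=1}^n\mathbb{Z}\epsilon_j$ and let $\epsilon^\vee_1,\dots,\epsilon^\vee_n$ be the dual basis of the dual lattice ($\epsilon^\vee_i(\epsilon_j)=\delta_{ij}$); set $\alpha^\vee_i=\epsilon^\vee_i-\epsilon^\vee_{i+1}$ for $1\le i\le n-1$. For $\nu\in\Lambda$ put $d_j:=\epsilon^\vee_j(\nu)$. The shifted Drinfeld Yangian $Y_\nu(\mathfrak{gl}_n)$ is the associative $\mathbb{C}$-algebra generated by $E_i^{(r)},F_i^{(r)}$ ($1\le i<n$, $r\ge1$), $D_i^{(s)}$ ($1\le i\le n$, $s\ge d_i$), $\widetilde D_i^{(s)}$ ($1\le i\le n$, $s\ge -d_i$), with defining relations (all admissible indices): (Y0) $D_i^{(d_i)}=1$, $\sum_{t=d_i}^{r+d_i}D_i^{(t)}\widetilde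 D_i^{(r-t)}=-\delta_{r,0}$, $[D_i^{(r)},D_j^{(s)}]=0$; (Y1) $[E_i^{(r)},F_j^{(s)}]=-\delta_{i,j}\sum_{t=-d_i}^{r+s-1-d_{i+1}}\widetilde D_i^{(t)}D_{i+1}^{(r+s-t-1)}$; (Y2) $[D_i^{(r)},E_j^{(s)}]=(\delta_{i,j+1}-\delta_{i,j})\sum_{t=d_i}^{r-1}D_i^{(t)}E_j^{(r+s-t-1)}$; (Y3) $[D_i^{(r)},F_j^{(s)}]=(\delta_{i,j}-\delta_{i,j+1})\sum_{t=d_i}^{r-1}F_j^{(r+s-t-1)}D_i^{(t)}$; (Y4) $[E_i^{(r)},E_i^{(s)}]=\sum_{t=1}^{r-1}E_i^{(t)}E_i^{(r+s-t-1)}-\sum_{t=1}^{s-1}E_i^{(t)}E_i^{(r+s-t-1)}$; (Y5) $[F_i^{(r)},F_i^{(s)}]=\sum_{t=1}^{s-1}F_i^{(r+s-t-1)}F_i^{(t)}-\sum_{t=1}^{r-1}F_i^{(r+s-t-1)}F_i^{(t)}$; (Y6) $[E_i^{(r+1)},E_{i+1}^{(s)}]-[E_i^{(r)},E_{i+1}^{(s+1)}]=-E_i^{(r)}E_{i+1}^{(s)}$; (Y7) $[F_i^{(r+1)},F_{i+1}^{(s)}]-[F_i^{(r)},F_{i+1}^{(s+1)}]=F_{i+1}^{(s)}F_i^{(r)}$; (Y8),(Y9) $[E_i^{(r)},E_j^{(s)}]=0=[F_i^{(r)},F_j^{(s)}]$ if $|i-j|>1$; (Y10),(Y11) for $|i-j|=1$: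 $[E_i^{(r)},[E_i^{(s)},E_j^{(t)}]]+[E_i^{(s)},[E_i^{(r)},E_j^{(t)}]]=0$ and the same with all $E$ replaced by $F$. *)

theory Defs
  imports "HOL-Algebra.QuotRing" "HOL-Algebra.Ideal" Complex_Main
begin

text \<open>E i r = E_i^(r), F i r = F_i^(r), D i s = D_i^(s), Dt i s = widetilde D_i^(s).
  A coweight mu in Lambda is given by its coordinates d_j = mu j (only j in 1..n matter).\<close>

datatype gen = E nat int | F nat int | D nat int | Dt nat int

definition adm :: "nat \<Rightarrow> (nat \<Rightarrow> int) \<Rightarrow> gen set" where
  "adm n \<mu> =
     {E i r | i r. 1 \<le> i \<and> i < n \<and> r \<ge> 1} \<union>
     {F i r | i r. 1 \<le> i \<and> i < n \<and> r \<ge> 1} \<union>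
     {D i s | i s. 1 \<le> i \<and> i \<le> n \<and> s \<ge> \<mu> i} \<union>
     {Dt i s | i s. 1 \<le> i \<and> i \<le> n \<and> s \<ge> - \<mu> i}"

text \<open>Elements: finitely supported functions from words to complex coefficients.\<close>

definition fmul :: "('g list \<Rightarrow> complex) \<Rightarrow> ('g list \<Rightarrow> complex) \<Rightarrow> 'g list \<Rightarrow> complex" where
  "fmul f g = (\<lambda>w. \<Sum>k\<in>{0..length w}. f (take k w) * g (drop k w))"

definition fadd :: "('g list \<Rightarrow> complex) \<Rightarrow> ('g list \<Rightarrow> complex) \<Rightarrow> 'g list \<Rightarrow> complex" where
  "fadd f g = (\<lambda>w. f w + g w)"

definition fsub :: "('g list \<Rightarrow> complex) \<Rightarrow> ('g list \<Rightarrow> complex) \<Rightarrow> 'g list \<Rightarrow> complex" where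
  "fsub f g = (\<lambda>w. f w - g w)"

definition fsmult :: "complex \<Rightarrow> ('g list \<Rightarrow> complex) \<Rightarrow> 'g list \<Rightarrow> complex" where
  "fsmult c f = (\<lambda>w. c * f w)"

definition fscal :: "complex \<Rightarrow> 'g list \<Rightarrow> complex" where
  "fscal c = (\<lambda>w. if w = [] then c else 0)"

definition fzero :: "'g list \<Rightarrow> complex" where
  "fzero = (\<lambda>w. 0)"

definition fone :: "'g list \<Rightarrow> complex" where
  "fone = fscal 1"

definition fgen :: "'g \<Rightarrow> 'g list \<Rightarrow> complex" where
  "fgen x = (\<lambda>w. if w = [x] then 1 else 0)"

definition fsum :: "('i \<Rightarrow> 'g list \<Rightarrow> complex) \<Rightarrow> 'i set \<Rightarrow> 'g list \<Rightarrow> complex" where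
  "fsum X T = (\<lambda>w. \<Sum>t\<in>T. X t w)"

definition fcomm :: "('g list \<Rightarrow> complex) \<Rightarrow> ('g list \<Rightarrow> complex) \<Rightarrow> 'g list \<Rightarrow> complex" where
  "fcomm a b = fsub (fmul a b) (fmul b a)"

definition free_alg :: "'g set \<Rightarrow> ('g list \<Rightarrow> complex) ring" where
  "free_alg G =
     \<lparr> carrier = {f. finite {w. f w \<noteq> 0} \<and> (\<forall>w. f w \<noteq> 0 \<longrightarrow> set w \<subseteq> G)},
       mult = fmul, one = fone, zero = fzero, add = fadd \<rparr>"

section \<open>Defining relations (each element r stands for the relation r = 0)\<close>

abbreviation g :: "gen \<Rightarrow> gen list \<Rightarrow> complex" where "g \<equiv> fgen"

definition delta :: "nat \<Rightarrow> nat \<Rightarrow> complex" where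
  "delta i j = (if i = j then 1 else 0)"

definition rels :: "nat \<Rightarrow> (nat \<Rightarrow> int) \<Rightarrow> (gen list \<Rightarrow> complex) set" where
  "rels n \<mu> =
   \<comment> \<open>Y0\<close>
   {fsub (g (D i (\<mu> i))) fone | i. 1 \<le> i \<and> i \<le> n} \<union>
   {fadd (fsum (\<lambda>t. fmul (g (D i t)) (g (Dt i (r - t)))) {\<mu> i .. r + \<mu> i})
         (if r = 0 then fone else fzero) | i r. 1 \<le> i \<and> i \<le> n \<and> r \<ge> 0} \<union>
   {fcomm (g (D i r)) (g (D j s)) | i j r s.
      1 \<le> i \<and> i \<le> n \<and> 1 \<le> j \<and> j \<le> n \<and> r \<ge> \<mu> i \<and> s \<ge> \<mu> j} \<union>
   \<comment> \<open>Y1\<close>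
   {fadd (fcomm (g (E i r)) (g (F j s)))
         (fsmult (delta i j)
            (fsum (\<lambda>t. fmul (g (Dt i t)) (g (D (Suc i) (r + s - t - 1))))
                  {- \<mu> i .. r + s - 1 - \<mu> (Suc i)})) | i j r s.
      1 \<le> i \<and> i < n \<and> 1 \<le> j \<and> j < n \<and> r \<ge> 1 \<and> s \<ge> 1} \<union>
   \<comment> \<open>Y2\<close>
   {fsub (fcomm (g (D i r)) (g (E j s)))
         (fsmult (delta i (Suc j) - delta i j)
            (fsum (\<lambda>t. fmul (g (D i t)) (g (E j (r + s - t - 1)))) {\<mu> i .. r - 1})) | i j r s.
      1 \<le> i \<and> i \<le> n \<and> 1 \<le> j \<and> j < n \<and> r \<ge> \<mu> i \<and> s \<ge> 1} \<union>
   \<comment> \<open>Y3\<close>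
   {fsub (fcomm (g (D i r)) (g (F j s)))
         (fsmult (delta i j - delta i (Suc j))
            (fsum (\<lambda>t. fmul (g (F j (r + s - t - 1))) (g (D i t))) {\<mu> i .. r - 1})) | i j r s.
      1 \<le> i \<and> i \<le> n \<and> 1 \<le> j \<and> j < n \<and> r \<ge> \<mu> i \<and> s \<ge> 1} \<union>
   \<comment> \<open>Y4\<close>
   {fsub (fcomm (g (E i r)) (g (E i s)))
         (fsub (fsum (\<lambda>t. fmul (g (E i t)) (g (E i (r + s - t - 1)))) {1 .. r - 1})
               (fsum (\<lambda>t. fmul (g (E i t)) (g (E i (r + s - t - 1)))) {1 .. s - 1})) | i r s.
      1 \<le> i \<and> i < n \<and> r \<ge> 1 \<and> s \<ge> 1} \<union>
   \<comment> \<open>Y5\<close>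
   {fsub (fcomm (g (F i r)) (g (F i s)))
         (fsub (fsum (\<lambda>t. fmul (g (F i (r + s - t - 1))) (g (F i t))) {1 .. s - 1})
               (fsum (\<lambda>t. fmul (g (F i (r + s - t - 1))) (g (F i t))) {1 .. r - 1})) | i r s.
      1 \<le> i \<and> i < n \<and> r \<ge> 1 \<and> s \<ge> 1} \<union>
   \<comment> \<open>Y6\<close>
   {fadd (fsub (fcomm (g (E i (r + 1))) (g (E (Suc i) s)))
               (fcomm (g (E i r)) (g (E (Suc i) (s + 1)))))
         (fmul (g (E i r)) (g (E (Suc i) s))) | i r s.
      1 \<le> i \<and> Suc i < n \<and> r \<ge> 1 \<and> s \<ge> 1} \<union>
   \<comment> \<open>Y7\<close>
   {fsub (fsub (fcomm (g (F i (r + 1))) (g (F (Suc i) s)))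
               (fcomm (g (F i r)) (g (F (Suc i) (s + 1)))))
         (fmul (g (F (Suc i) s)) (g (F i r))) | i r s.
      1 \<le> i \<and> Suc i < n \<and> r \<ge> 1 \<and> s \<ge> 1} \<union>
   \<comment> \<open>Y8, Y9\<close>
   {fcomm (g (E i r)) (g (E j s)) | i j r s.
      1 \<le> i \<and> i < n \<and> 1 \<le> j \<and> j < n \<and> (i > Suc j \<or> j > Suc i) \<and> r \<ge> 1 \<and> s \<ge> 1} \<union>
   {fcomm (g (F i r)) (g (F j s)) | i j r s.
      1 \<le> i \<and> i < n \<and> 1 \<le> j \<and> j < n \<and> (i > Suc j \<or> j > Suc i) \<and> r \<ge> 1 \<and> s \<ge> 1} \<union>
   \<comment> \<open>Y10, Y11\<close>
   {fadd (fcomm (g (E i r)) (fcomm (g (E i s)) (g (E j t))))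
         (fcomm (g (E i s)) (fcomm (g (E i r)) (g (E j t)))) | i j r s t.
      1 \<le> i \<and> i < n \<and> 1 \<le> j \<and> j < n \<and> (i = Suc j \<or> j = Suc i) \<and> r \<ge> 1 \<and> s \<ge> 1 \<and> t \<ge> 1} \<union>
   {fadd (fcomm (g (F i r)) (fcomm (g (F i s)) (g (F j t))))
         (fcomm (g (F i s)) (fcomm (g (F i r)) (g (F j t)))) | i j r s t.
      1 \<le> i \<and> i < n \<and> 1 \<le> j \<and> j < n \<and> (i = Suc j \<or> j = Suc i) \<and> r \<ge> 1 \<and> s \<ge> 1 \<and> t \<ge> 1}"

definition yfree :: "nat \<Rightarrow> (nat \<Rightarrow> int) \<Rightarrow> (gen list \<Rightarrow> complex) ring" where
  "yfree n \<mu> = free_alg (adm n \<mu>)"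

definition yideal :: "nat \<Rightarrow> (nat \<Rightarrow> int) \<Rightarrow> (gen list \<Rightarrow> complex) set" where
  "yideal n \<mu> = genideal (yfree n \<mu>) (rels n \<mu>)"

definition yangian :: "nat \<Rightarrow> (nat \<Rightarrow> int) \<Rightarrow> (gen list \<Rightarrow> complex) set ring" where
  "yangian n \<mu> = (yfree n \<mu>) Quot (yideal n \<mu>)"

definition ycls :: "nat \<Rightarrow> (nat \<Rightarrow> int) \<Rightarrow> (gen list \<Rightarrow> complex) \<Rightarrow> (gen list \<Rightarrow> complex) set" where
  "ycls n \<mu> x = a_r_coset (yfree n \<mu>) (yideal n \<mu>) x"

end

theory Submission
  imports Defs
begin

text \<open>The hypothesis says that \<open>\<mu>1 - \<mu>2\<close> is constant, say \<open>k\<close>, on \<open>{1..n}\<close>.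
  Relabelling the generators by \<open>D i s \<mapsto> D i (s - k)\<close>, \<open>Dt i s \<mapsto> Dt i (s + k)\<close> (and the
  identity on \<open>E\<close>, \<open>F\<close>) is a bijection from the generators of \<open>Y\<^sub>\<mu>\<^sub>1\<close> onto those of \<open>Y\<^sub>\<mu>\<^sub>2\<close>,
  hence induces an isomorphism of the free algebras. It maps the defining relations of \<open>Y\<^sub>\<mu>\<^sub>1\<close>
  onto those of \<open>Y\<^sub>\<mu>\<^sub>2\<close>: relations without \<open>D\<close>, \<open>Dt\<close> are fixed, and in (Y0)--(Y3) the
  shift is absorbed by shifting the summation index \<open>t\<close> by \<open>\<plusminus>k\<close>. So it maps the ideal of
  relations onto the ideal of relations and descends to the quotients.\<close>

definition splits :: "'a list \<Rightarrow> ('a list \<times> 'a list) set" where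
  "splits w = (\<lambda>k. (take k w, drop k w)) ` {0..length w}"

lemma mem_splits: "p \<in> splits w \<longleftrightarrow> fst p @ snd p = w"
proof
  assume "p \<in> splits w"
  then show "fst p @ snd p = w" by (auto simp: splits_def)
next
  assume p: "fst p @ snd p = w"
  then have "p = (take (length (fst p)) w, drop (length (fst p)) w)" by (cases p) auto
  moreover have "length (fst p) \<in> {0..length w}" using p by auto
  ultimately show "p \<in> splits w" unfolding splits_def by blast
qed

lemma finite_splits [simp]: "finite (splits w)"
  by (simp add: splits_def)

lemma fmul_splits: "fmul f h w = (\<Sum>p\<in>splits w. f (fst p) * h (snd p))"
proof -
  have "inj_on (\<lambda>k. (take k w, drop k w)) {0..length w}"
    by (intro inj_onI) (metis atLeastAtMost_iff length_take min.absorb2 prod.inject)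
  then show ?thesis unfolding fmul_def splits_def by (simp add: sum.reindex)
qed

lemma fmul_assoc: "fmul (fmul f h) l = fmul f (fmul h l)"
proof
  fix w
  have L: "fmul (fmul f h) l w = (\<Sum>pq\<in>Sigma (splits w) (\<lambda>p. splits (fst p)).
             f (fst (snd pq)) * h (snd (snd pq)) * l (snd (fst pq)))"
    by (simp add: fmul_splits sum_distrib_right sum.Sigma split_def)
  have R: "fmul f (fmul h l) w = (\<Sum>pq\<in>Sigma (splits w) (\<lambda>p. splits (snd p)).
             f (fst (fst pq)) * (h (fst (snd pq)) * l (snd (snd pq))))"
    by (simp add: fmul_splits sum_distrib_left sum.Sigma split_def)
  show "fmul (fmul f h) l w = fmul f (fmul h l) w"
    unfolding L R
    by (rule sum.reindex_bij_witness[where i="\<lambda>((a, b), (c, d)). ((a @ c, d), (a, c))"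
          and j="\<lambda>((x, y), (u, v)). ((u, v @ y), (v, y))"])
       (auto simp: mem_splits)
qed

lemma fmul_fone_left: "fmul fone f = f"
proof
  fix w
  have "fmul fone f w = (\<Sum>p\<in>{p\<in>splits w. fst p = []}. f (snd p))"
    unfolding fmul_splits sum.inter_filter[OF finite_splits]
    by (auto simp: fone_def fscal_def intro!: sum.cong)
  also have "{p\<in>splits w. fst p = []} = {([], w)}"
    by (auto simp: mem_splits)
  finally show "fmul fone f w = f w" by simp
qed

lemma fmul_fone_right: "fmul f fone = f"
proof
  fix w
  have "fmul f fone w = (\<Sum>p\<in>{p\<in>splits w. snd p = []}. f (fst p))"
    unfolding fmul_splits sum.inter_filter[OF finite_splits]
    by (auto simp: fone_def fscal_def intro!: sum.cong)
  also have "{p\<in>splits w. snd p = []} = {(w, [])}"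
    by (auto simp: mem_splits)
  finally show "fmul f fone w = f w" by simp
qed

lemma carrier_free_alg:
  "f \<in> carrier (free_alg G) \<longleftrightarrow> finite {w. f w \<noteq> 0} \<and> (\<forall>w. f w \<noteq> 0 \<longrightarrow> set w \<subseteq> G)"
  by (simp add: free_alg_def)

lemma fadd_closed:
  assumes "a \<in> carrier (free_alg G)" "b \<in> carrier (free_alg G)"
  shows "fadd a b \<in> carrier (free_alg G)"
proof -
  have "{w. fadd a b w \<noteq> 0} \<subseteq> {w. a w \<noteq> 0} \<union> {w. b w \<noteq> 0}"
    by (auto simp: fadd_def)
  with assms show ?thesis
    by (auto simp: carrier_free_alg fadd_def intro: finite_subset)
qed

lemma fmul_nonzero_split:
  assumes "fmul a b w \<noteq> 0"
  obtains u v where "w = u @ v" "a u \<noteq> 0" "b v \<noteq> 0"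
proof -
  from assms obtain p where "p \<in> splits w" "a (fst p) * b (snd p) \<noteq> 0"
    unfolding fmul_splits by (meson sum.not_neutral_contains_not_neutral)
  then show thesis using that by (auto simp: mem_splits)
qed

lemma fmul_closed:
  assumes a: "a \<in> carrier (free_alg G)" and b: "b \<in> carrier (free_alg G)"
  shows "fmul a b \<in> carrier (free_alg G)"
proof -
  have "{w. fmul a b w \<noteq> 0} \<subseteq> (\<lambda>(u, v). u @ v) ` ({u. a u \<noteq> 0} \<times> {v. b v \<noteq> 0})"
    by (auto elim!: fmul_nonzero_split)
  moreover have "finite ({u. a u \<noteq> 0} \<times> {v. b v \<noteq> 0})"
    using a b by (simp add: carrier_free_alg)
  ultimately have "finite {w. fmul a b w \<noteq> 0}"
    by (auto intro: finite_subset)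
  moreover have "set w \<subseteq> G" if "fmul a b w \<noteq> 0" for w
    using that a b by (fastforce simp: carrier_free_alg elim!: fmul_nonzero_split)
  ultimately show ?thesis by (simp add: carrier_free_alg)
qed

lemma ring_free_alg: "ring (free_alg G)"
proof (rule ringI)
  show "abelian_group (free_alg G)"
  proof (rule abelian_groupI)
    fix x assume "x \<in> carrier (free_alg G)"
    then show "\<exists>y\<in>carrier (free_alg G). y \<oplus>\<^bsub>free_alg G\<^esub> x = \<zero>\<^bsub>free_alg G\<^esub>"
      by (intro bexI[of _ "\<lambda>w. - x w"]) (auto simp: free_alg_def fadd_def fzero_def)
  qed (use fadd_closed in \<open>simp_all add: free_alg_def fadd_def fzero_def ac_simps\<close>)
  show "monoid (free_alg G)"
  proof (rule monoidI)
    show "\<one>\<^bsub>free_alg G\<^esub> \<in> carrier (free_alg G)"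
      by (simp add: free_alg_def fone_def fscal_def)
  qed (use fmul_closed in \<open>simp_all add: free_alg_def fmul_assoc fmul_fone_left fmul_fone_right\<close>)
qed (simp_all add: free_alg_def fadd_def fmul_def distrib_left distrib_right sum.distrib)

text \<open>For a bijection \<open>\<sigma>\<close> of generators with inverse \<open>\<tau>\<close>, \<open>fpull \<tau>\<close> is the algebra map
  induced by \<open>\<sigma>\<close> (see \<open>fpull_fgen\<close>).\<close>

definition fpull :: "('g \<Rightarrow> 'h) \<Rightarrow> ('h list \<Rightarrow> complex) \<Rightarrow> 'g list \<Rightarrow> complex" where
  "fpull \<tau> f = (\<lambda>w. f (map \<tau> w))"

lemma fpull_fadd [simp]: "fpull \<tau> (fadd a b) = fadd (fpull \<tau> a) (fpull \<tau> b)"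
  by (simp add: fpull_def fadd_def)

lemma fpull_fsub [simp]: "fpull \<tau> (fsub a b) = fsub (fpull \<tau> a) (fpull \<tau> b)"
  by (simp add: fpull_def fsub_def)

lemma fpull_fsmult [simp]: "fpull \<tau> (fsmult c a) = fsmult c (fpull \<tau> a)"
  by (simp add: fpull_def fsmult_def)

lemma fpull_fsum [simp]: "fpull \<tau> (fsum X T) = fsum (\<lambda>t. fpull \<tau> (X t)) T"
  by (simp add: fpull_def fsum_def)

lemma fpull_fmul [simp]: "fpull \<tau> (fmul a b) = fmul (fpull \<tau> a) (fpull \<tau> b)"
  by (simp add: fpull_def fmul_def take_map drop_map)

lemma fpull_fcomm [simp]: "fpull \<tau> (fcomm a b) = fcomm (fpull \<tau> a) (fpull \<tau> b)"
  by (simp add: fcomm_def)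

lemma fpull_fscal [simp]: "fpull \<tau> (fscal c) = fscal c"
  by (simp add: fpull_def fscal_def)

lemma fpull_fone [simp]: "fpull \<tau> fone = fone"
  by (simp add: fone_def)

lemma fpull_fzero [simp]: "fpull \<tau> fzero = fzero"
  by (simp add: fpull_def fzero_def)

lemma fpull_fgen:
  assumes "\<And>x. \<tau> (\<sigma> x) = x" "\<And>y. \<sigma> (\<tau> y) = y"
  shows "fpull \<tau> (fgen x) = fgen (\<sigma> x)"
proof -
  have "map \<tau> w = [x] \<longleftrightarrow> w = [\<sigma> x]" for w
    using assms by (cases w) auto
  then show ?thesis by (simp add: fpull_def fgen_def)
qed

lemma fpull_inverse:
  assumes "\<And>x. \<sigma> (\<tau> x) = x"
  shows "fpull \<tau> (fpull \<sigma> f) = f"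
  using assms by (simp add: fpull_def comp_def)

lemma fpull_carrier:
  assumes "inj \<tau>" "\<tau> -` G \<subseteq> H" "f \<in> carrier (free_alg G)"
  shows "fpull \<tau> f \<in> carrier (free_alg H)"
proof -
  have "{w. fpull \<tau> f w \<noteq> 0} = map \<tau> -` {w. f w \<noteq> 0}"
    by (auto simp: fpull_def)
  moreover have "inj (map \<tau>)"
    using assms(1) by (simp add: inj_mapI)
  ultimately have "finite {w. fpull \<tau> f w \<noteq> 0}"
    using assms(3) finite_vimageI by (fastforce simp: carrier_free_alg)
  moreover have "set w \<subseteq> H" if "fpull \<tau> f w \<noteq> 0" for w
    using that assms(2,3) by (fastforce simp: carrier_free_alg fpull_def)
  ultimately show ?thesis by (simp add: carrier_free_alg)
qed

lemma fpull_add: "fpull \<tau> (a \<oplus>\<^bsub>free_alg G\<^esub> b) = fpull \<tau> a \<oplus>\<^bsub>free_alg H\<^esub> fpull \<tau> b"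
  by (simp add: free_alg_def)

lemma fpull_mult: "fpull \<tau> (a \<otimes>\<^bsub>free_alg G\<^esub> b) = fpull \<tau> a \<otimes>\<^bsub>free_alg H\<^esub> fpull \<tau> b"
  by (simp add: free_alg_def)

lemma fpull_one: "fpull \<tau> \<one>\<^bsub>free_alg G\<^esub> = \<one>\<^bsub>free_alg H\<^esub>"
  by (simp add: free_alg_def)

lemma fpull_ring_hom:
  assumes "inj \<tau>" "\<tau> -` G \<subseteq> H"
  shows "fpull \<tau> \<in> ring_hom (free_alg G) (free_alg H)"
  by (rule ring_hom_memI) (simp_all add: fpull_carrier[OF assms] fpull_add fpull_mult fpull_one)

lemma fpull_image_carrier:
  assumes "\<And>x. \<sigma> (\<tau> x) = x" "\<And>y. \<tau> (\<sigma> y) = y" "\<tau> -` G \<subseteq> H" "\<sigma> -` H \<subseteq> G"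
  shows "fpull \<tau> ` carrier (free_alg G) = carrier (free_alg H)"
proof -
  have "inj \<tau>" "inj \<sigma>"
    using assms(1,2) by (metis injI)+
  have "fpull \<tau> (fpull \<sigma> f) \<in> fpull \<tau> ` carrier (free_alg G)" if "f \<in> carrier (free_alg H)" for f
    using fpull_carrier[OF \<open>inj \<sigma>\<close> assms(4) that] by blast
  then show ?thesis
    using fpull_carrier[OF \<open>inj \<tau>\<close> assms(3)] by (auto simp: fpull_inverse[where \<sigma> = \<sigma> and \<tau> = \<tau>, OF assms(1)])
qed

lemma image_a_r_coset:
  assumes "\<And>a b. T (a \<oplus>\<^bsub>R\<^esub> b) = T a \<oplus>\<^bsub>S\<^esub> T b"
  shows "T ` (I +>\<^bsub>R\<^esub> x) = (T ` I) +>\<^bsub>S\<^esub> T x"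
  unfolding a_r_coset_def' by (simp add: image_UN assms)

lemma genideal_eq_UNIV: "\<not> A \<subseteq> carrier R \<Longrightarrow> genideal R A = UNIV"
  by (auto simp: genideal_def dest: ideal.Icarr)

lemma image_genideal_subset:
  assumes "ring R" "ring S" "T \<in> ring_hom R S" "A \<subseteq> carrier R"
  shows "T ` genideal R A \<subseteq> genideal S (T ` A)"
proof -
  interpret ring_hom_ring R S T
    using assms(1-3) by (rule ring_hom_ringI2)
  have TA: "T ` A \<subseteq> carrier S"
    using assms(4) by auto
  have "ideal {r \<in> carrier R. T r \<in> genideal S (T ` A)} R"
    by (rule ideal_vimage[OF S.genideal_ideal[OF TA]])
  moreover have "A \<subseteq> {r \<in> carrier R. T r \<in> genideal S (T ` A)}"
    using assms(4) S.genideal_self[OF TA] by auto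
  ultimately have "genideal R A \<subseteq> {r \<in> carrier R. T r \<in> genideal S (T ` A)}"
    by (rule R.genideal_minimal)
  then show ?thesis by auto
qed

lemma image_genideal:
  assumes rings: "ring R" "ring S"
    and homs: "T \<in> ring_hom R S" "T' \<in> ring_hom S R"
    and inverse: "\<And>x. T' (T x) = x" "\<And>y. T (T' y) = y"
  shows "T ` genideal R A = genideal S (T ` A)"
proof (cases "A \<subseteq> carrier R")
  case True
  then have TA: "T ` A \<subseteq> carrier S"
    using homs(1) by (auto simp: ring_hom_def)
  have "genideal S (T ` A) = T ` T' ` genideal S (T ` A)"
    by (simp add: image_image inverse)
  also have "\<dots> \<subseteq> T ` genideal R (T' ` T ` A)"
    by (intro image_mono image_genideal_subset[OF rings(2,1) homs(2) TA])
  also have "T' ` T ` A = A"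
    by (simp add: image_image inverse)
  finally show ?thesis
    using image_genideal_subset[OF rings homs(1) True] by blast
next
  case False
  have "\<not> T ` A \<subseteq> carrier S"
  proof
    assume "T ` A \<subseteq> carrier S"
    then have "T' ` T ` A \<subseteq> carrier R"
      using homs(2) by (auto simp: ring_hom_def)
    with False show False by (simp add: image_image inverse)
  qed
  moreover have "surj T"
    by (metis inverse(2) surjI)
  ultimately show ?thesis
    using False by (simp add: genideal_eq_UNIV)
qed

lemma ring_iso_FactRing_image:
  assumes add: "\<And>a b. T (a \<oplus>\<^bsub>R\<^esub> b) = T a \<oplus>\<^bsub>S\<^esub> T b"
    and mult: "\<And>a b. T (a \<otimes>\<^bsub>R\<^esub> b) = T a \<otimes>\<^bsub>S\<^esub> T b"
    and one: "T \<one>\<^bsub>R\<^esub> = \<one>\<^bsub>S\<^esub>"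
    and carrier: "T ` carrier R = carrier S"
    and "inj T"
  shows "(\<lambda>X. T ` X) \<in> ring_iso (R Quot I) (S Quot (T ` I))"
proof (rule ring_iso_memI)
  note coset = image_a_r_coset[of T R S, OF add]
  have image_carrier: "(\<lambda>X. T ` X) ` carrier (R Quot I) = carrier (S Quot (T ` I))"
    unfolding FactRing_def A_RCOSETS_def' by (simp add: image_UN coset carrier[symmetric])
  then show "T ` X \<in> carrier (S Quot T ` I)" if "X \<in> carrier (R Quot I)" for X
    using that by blast
  show "T ` (X \<otimes>\<^bsub>R Quot I\<^esub> Y) = T ` X \<otimes>\<^bsub>S Quot T ` I\<^esub> T ` Y" for X Y
    by (simp add: FactRing_def rcoset_mult_def image_UN coset mult)
  show "T ` (X \<oplus>\<^bsub>R Quot I\<^esub> Y) = T ` X \<oplus>\<^bsub>S Quot T ` I\<^esub> T ` Y" for X Y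
    by (simp add: FactRing_def set_add_def' image_UN add)
  show "T ` \<one>\<^bsub>R Quot I\<^esub> = \<one>\<^bsub>S Quot T ` I\<^esub>"
    by (simp add: FactRing_def coset one)
  show "bij_betw ((`) T) (carrier (R Quot I)) (carrier (S Quot T ` I))"
  proof (rule bij_betw_imageI)
    show "inj_on ((`) T) (carrier (R Quot I))"
      using \<open>inj T\<close> by (simp add: inj_on_def inj_image_eq_iff)
  qed (fact image_carrier)
qed

fun shift_gen :: "int \<Rightarrow> gen \<Rightarrow> gen" where
  "shift_gen k (E i r) = E i r"
| "shift_gen k (F i r) = F i r"
| "shift_gen k (D i s) = D i (s - k)"
| "shift_gen k (Dt i s) = Dt i (s + k)"

lemma shift_gen_inverse [simp]:
  "shift_gen (- k) (shift_gen k x) = x"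
  "shift_gen k (shift_gen (- k) x) = x"
  by (cases x; simp)+

lemma inj_shift_gen: "inj (shift_gen k)"
  by (metis injI shift_gen_inverse(1))

lemma fpull_shift_gen_inverse [simp]:
  "fpull (shift_gen k) (fpull (shift_gen (- k)) f) = f"
  "fpull (shift_gen (- k)) (fpull (shift_gen k) f) = f"
  by (simp_all add: fpull_inverse)

lemma fpull_shift_gen_fgen [simp]: "fpull (shift_gen (- k)) (fgen x) = fgen (shift_gen k x)"
  by (rule fpull_fgen) simp_all

lemma shift_gen_vimage_adm:
  assumes \<mu>: "\<And>i. 1 \<le> i \<Longrightarrow> i \<le> n \<Longrightarrow> \<mu>2 i = \<mu>1 i - k"
  shows "shift_gen (- k) -` adm n \<mu>1 \<subseteq> adm n \<mu>2"
proof
  fix x assume "x \<in> shift_gen (- k) -` adm n \<mu>1"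
  then show "x \<in> adm n \<mu>2"
    by (cases x) (auto simp: adm_def \<mu>)
qed

lemma fsum_reindex:
  fixes d :: int
  shows "fsum X {a..b} = fsum (\<lambda>t. X (t + d)) {a - d..b - d}"
proof -
  have "(\<Sum>t\<in>{a..b}. X t w) = (\<Sum>t\<in>{a - d..b - d}. X (t + d) w)" for w
    by (rule sum.reindex_bij_witness[where i="\<lambda>t. t + d" and j="\<lambda>t. t - d"]) auto
  then show ?thesis by (simp add: fsum_def)
qed

lemma fpull_shift_gen_rels:
  assumes \<mu>: "\<And>i. 1 \<le> i \<Longrightarrow> i \<le> n \<Longrightarrow> \<mu>2 i = \<mu>1 i - k"
  shows "fpull (shift_gen (- k)) ` rels n \<mu>1 \<subseteq> rels n \<mu>2"
  unfolding rels_def image_Un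
  apply (intro Un_mono; rule image_subsetI; elim CollectE exE conjE; hypsubst)
  subgoal using \<mu> by force
  subgoal for x i r
    apply (rule CollectI, rule exI[of _ i], rule exI[of _ r], intro conjI)
    by (simp_all add: \<mu> fsum_reindex[of _ "\<mu>1 i" _ k] algebra_simps)
  subgoal using \<mu> by force
  subgoal for x i j r s
    apply (rule CollectI, rule exI[of _ i], rule exI[of _ j], rule exI[of _ r], rule exI[of _ s], intro conjI)
    by (simp_all add: \<mu> fsum_reindex[of _ "- \<mu>1 i" _ "- k"] algebra_simps)
  subgoal for x i j r s
    apply (rule CollectI, rule exI[of _ i], rule exI[of _ j], rule exI[of _ "r - k"], rule exI[of _ s], intro conjI)
    by (simp_all add: \<mu> fsum_reindex[of _ "\<mu>1 i" _ k] algebra_simps)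
  subgoal for x i j r s
    apply (rule CollectI, rule exI[of _ i], rule exI[of _ j], rule exI[of _ "r - k"], rule exI[of _ s], intro conjI)
    by (simp_all add: \<mu> fsum_reindex[of _ "\<mu>1 i" _ k] algebra_simps)
  by force+

lemma
  assumes \<mu>: "\<And>i. 1 \<le> i \<Longrightarrow> i \<le> n \<Longrightarrow> \<mu>2 i = \<mu>1 i - k"
  shows ring_iso_yangian_shift:
      "(\<lambda>X. fpull (shift_gen (- k)) ` X) \<in> ring_iso (yangian n \<mu>1) (yangian n \<mu>2)"
    and image_ycls_shift:
      "fpull (shift_gen (- k)) ` ycls n \<mu>1 x = ycls n \<mu>2 (fpull (shift_gen (- k)) x)"
proof -
  let ?T = "fpull (shift_gen (- k))" and ?T' = "fpull (shift_gen (- (- k)))"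
  have "?T ` rels n \<mu>1 \<subseteq> rels n \<mu>2"
    by (rule fpull_shift_gen_rels) (simp add: \<mu>)
  moreover have "rels n \<mu>2 = ?T ` ?T' ` rels n \<mu>2"
    by (simp add: image_image fpull_inverse)
  moreover have "?T' ` rels n \<mu>2 \<subseteq> rels n \<mu>1"
    by (rule fpull_shift_gen_rels) (simp add: \<mu>)
  ultimately have rels: "?T ` rels n \<mu>1 = rels n \<mu>2"
    by blast
  have adm: "shift_gen (- k) -` adm n \<mu>1 \<subseteq> adm n \<mu>2" "shift_gen (- (- k)) -` adm n \<mu>2 \<subseteq> adm n \<mu>1"
    by (rule shift_gen_vimage_adm, simp add: \<mu>)+
  have ideal: "?T ` yideal n \<mu>1 = yideal n \<mu>2"
    unfolding yideal_def yfree_def rels[symmetric]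
  proof (rule image_genideal[OF ring_free_alg ring_free_alg])
    show "?T \<in> ring_hom (free_alg (adm n \<mu>1)) (free_alg (adm n \<mu>2))"
      by (rule fpull_ring_hom[OF inj_shift_gen adm(1)])
    show "?T' \<in> ring_hom (free_alg (adm n \<mu>2)) (free_alg (adm n \<mu>1))"
      by (rule fpull_ring_hom[OF inj_shift_gen adm(2)])
  qed simp_all
  have "inj ?T"
    by (metis injI fpull_shift_gen_inverse(1))
  then show "(\<lambda>X. ?T ` X) \<in> ring_iso (yangian n \<mu>1) (yangian n \<mu>2)"
    unfolding yangian_def ideal[symmetric] unfolding yfree_def
    by (intro ring_iso_FactRing_image fpull_add fpull_mult fpull_one
          fpull_image_carrier[where \<sigma> = "shift_gen (- (- k))"] adm) simp_all
  show "?T ` ycls n \<mu>1 x = ycls n \<mu>2 (?T x)"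
    unfolding ycls_def ideal[symmetric] unfolding yfree_def
    by (rule image_a_r_coset) (rule fpull_add)
qed

lemma diff_eq_of_equal_steps:
  fixes \<mu>1 \<mu>2 :: "nat \<Rightarrow> int"
  assumes steps: "\<forall>i. 1 \<le> i \<and> i \<le> n - 1 \<longrightarrow> \<mu>1 i - \<mu>1 (Suc i) = \<mu>2 i - \<mu>2 (Suc i)"
    and "1 \<le> i" "i \<le> n"
  shows "\<mu>1 i - \<mu>2 i = \<mu>1 1 - \<mu>2 1"
  using assms(2,3)
proof (induction i rule: dec_induct)
  case (step m)
  then show ?case
    using steps by (auto simp: algebra_simps)
qed simp

theorem lemma2p2:
  fixes n :: nat and \<mu>1 \<mu>2 :: "nat \<Rightarrow> int"
  assumes "n \<ge> 2"
    and "\<forall>i. 1 \<le> i \<and> i \<le> n - 1 \<longrightarrow> \<mu>1 i - \<mu>1 (Suc i) = \<mu>2 i - \<mu>2 (Suc i)"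
  shows "\<exists>h. h \<in> ring_iso (yangian n \<mu>1) (yangian n \<mu>2)
    \<and> (\<forall>c. h (ycls n \<mu>1 (fscal c)) = ycls n \<mu>2 (fscal c))
    \<and> (\<forall>i r. 1 \<le> i \<and> i < n \<and> r \<ge> 1 \<longrightarrow>
          h (ycls n \<mu>1 (fgen (E i r))) = ycls n \<mu>2 (fgen (E i r))
        \<and> h (ycls n \<mu>1 (fgen (F i r))) = ycls n \<mu>2 (fgen (F i r)))
    \<and> (\<forall>i s. 1 \<le> i \<and> i \<le> n \<and> s \<ge> \<mu>1 i \<longrightarrow>
          h (ycls n \<mu>1 (fgen (D i s))) = ycls n \<mu>2 (fgen (D i (s - (\<mu>1 i - \<mu>2 i)))))
    \<and> (\<forall>i s. 1 \<le> i \<and> i \<le> n \<and> s \<ge> - \<mu>1 i \<longrightarrow>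
          h (ycls n \<mu>1 (fgen (Dt i s))) = ycls n \<mu>2 (fgen (Dt i (s + (\<mu>1 i - \<mu>2 i)))))"
proof -
  define k where "k = \<mu>1 1 - \<mu>2 1"
  have \<mu>: "\<mu>2 i = \<mu>1 i - k" if "1 \<le> i" "i \<le> n" for i
    using diff_eq_of_equal_steps[OF assms(2) that] by (simp add: k_def)
  show ?thesis
    by (intro exI[of _ "\<lambda>X. fpull (shift_gen (- k)) ` X"] conjI allI impI ring_iso_yangian_shift)
       (simp_all add: \<mu> image_ycls_shift[of n \<mu>2 \<mu>1 k])
qed

end
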